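(* Let $d\in\mathbb{N}$, $R\in(0,\infty]$, and let $\varphi\colon[0,R)\to\mathbb{R}$ be strictly increasing and convex on $[0,R)$. Let $\mathring{B}^{(d)}_R=\{x\in\mathbb{R}^d : |x|<R\}$ (so $\mathring{B}^{(d)}_\infty=\mathbb{R}^d$) and define $\rho\colon \mathring{B}^{(d)}_R\to(0,\infty)$ by $\rho(x)=\exp(-\varphi(|x|))$. Let $U_\rho$ be the simple slice sampling transition kernel of $\rho$. Then for all $x,y\in\mathring{B}^{(d)}_R$, \[ W\big(U_\rho(x,\cdot),U_\rho(y,\cdot)\big)\le\Big(1-\frac{1}{d+1}\Big)\,\big|\,|x|-|y|\,\big|. \]
   Context: $|\cdot|$ is the Euclidean norm and $\lambda_d$ is $d$-dimensional Lebesgue measure. For an unnormalized density $\rho\colon G\to(0,\infty)$ on $G\subseteq\mathbb{R}^d$, the level sets are $G(t)=\{x\in G:\rho(x)\ge t\}$ for $t>0$, $U_t$ denotes the uniform distribution on $G(t)$, i.e. $U_t(A)=\lambda_d(A\cap G(t))/\lambda_d(G(t))$, and the simple slice sampling kernel is $U_\rho(x,A)=\frac{1}{\rho(x)}\int_0^{\rho(x)}U_t(A)\,\mathrm{d}t$ for $x\in G$, $A\in\mathcal{B}(G)$ (one step: draw $t$ uniformly in $[0,\rho(x)]$, then draw the next state uniformly on $G(t)$). For probability measures $\mu,\nu$ on $G$, the Wasserstein distance is $W(\mu,\nu)=\inf_{\gamma}\int_{G\times G}|x-y|\,\mathrm{d}\gamma(x,y)$, the infimum over all couplings $\gamma$ of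 $\mu$ and $\nu$ (measures on $G\times G$ with marginals $\mu$ and $\nu$). *)

theory Defs
  imports "HOL-Probability.Probability"
begin

definition open_ball_R :: "ereal \<Rightarrow> ('a::euclidean_space) set" where
  "open_ball_R R = {x. ereal (norm x) < R}"

definition level_set :: "'a set \<Rightarrow> ('a \<Rightarrow> real) \<Rightarrow> real \<Rightarrow> 'a set" where
  "level_set G \<rho> t = {x \<in> G. \<rho> x \<ge> t}"

definition unif_level :: "('a::euclidean_space) set \<Rightarrow> ('a \<Rightarrow> real) \<Rightarrow> real \<Rightarrow> 'a measure" where
  "unif_level G \<rho> t = uniform_measure lborel (level_set G \<rho> t)"

definition slice_kernel :: "('a::euclidean_space) set \<Rightarrow> ('a \<Rightarrow> real) \<Rightarrow> 'a \<Rightarrow> 'a measure" where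
  "slice_kernel G \<rho> x = measure_of UNIV (sets borel)
     (\<lambda>A. ennreal (1 / \<rho> x) * (\<integral>\<^sup>+ t \<in> {0..\<rho> x}. emeasure (unif_level G \<rho> t) A \<partial>lborel))"

definition couplings :: "('a::euclidean_space) measure \<Rightarrow> 'a measure \<Rightarrow> ('a \<times> 'a) measure set" where
  "couplings \<mu> \<nu> = {\<gamma>. sets \<gamma> = sets (borel \<Otimes>\<^sub>M borel) \<and>
       distr \<gamma> borel fst = \<mu> \<and> distr \<gamma> borel snd = \<nu>}"

definition wasserstein :: "('a::euclidean_space) measure \<Rightarrow> 'a measure \<Rightarrow> ennreal" where
  "wasserstein \<mu> \<nu> = (INF \<gamma> \<in> couplings \<mu> \<nu>. \<integral>\<^sup>+ z. ennreal (dist (fst z) (snd z)) \<partial>\<gamma>)"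

end

theory Submission
  imports Defs
begin

text \<open>Every level set of \<open>\<rho> x = exp (- \<phi> \<bar>x\<bar>)\<close> is a centred ball up to its boundary
  sphere, of radius \<open>level_radius (- ln t)\<close>. Writing the level as \<open>t = \<rho> x * \<tau>\<close> with \<open>\<tau>\<close>
  uniform on \<open>(0, 1)\<close>, one step of the sampler from \<open>x\<close> is
  \<open>level_radius (\<phi> \<bar>x\<bar> - ln \<tau>) *\<^sub>R u\<close> with \<open>u\<close> uniform on the unit ball. Using the same
  \<open>(\<tau>, u)\<close> for \<open>x\<close> and \<open>y\<close> couples the two steps. Since the increments of the convex \<open>\<phi>\<close>
  grow, \<open>r \<mapsto> level_radius (\<phi> r + w)\<close> is 1-Lipschitz for \<open>w \<ge> 0\<close>, so the coupled points are at
  distance at most \<open>\<bar>\<bar>x\<bar> - \<bar>y\<bar>\<bar> * \<bar>u\<bar>\<close>, and \<open>\<bar>u\<bar>\<close> has mean \<open>d / (d + 1)\<close>.\<close>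

lemma convex_on_increment_mono:
  fixes f :: "real \<Rightarrow> real"
  assumes f: "convex_on S f" and S: "a \<in> S" "b + h \<in> S" and "a \<le> b" "0 \<le> h"
  shows "f (a + h) - f a \<le> f (b + h) - f b"
proof (cases "a = b + h")
  case True
  with assms have "a = b" "h = 0" by auto
  then show ?thesis by simp
next
  case False
  then have L: "b + h - a > 0" using assms by linarith
  define \<mu> where "\<mu> = h / (b + h - a)"
  have \<mu>: "0 \<le> \<mu>" "\<mu> \<le> 1" using L assms by (auto simp: \<mu>_def field_simps)
  have "\<mu> * (b + h - a) = h" using L by (simp add: \<mu>_def)
  then have ah: "(1 - \<mu>) * a + \<mu> * (b + h) = a + h"
    and b: "(1 - (1 - \<mu>)) * a + (1 - \<mu>) * (b + h) = b"
    by (simp_all add: algebra_simps)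
  have "f (a + h) \<le> (1 - \<mu>) * f a + \<mu> * f (b + h)"
    using convex_onD[OF f, of \<mu> a "b + h"] \<mu> S by (simp add: ah)
  moreover have "f b \<le> (1 - (1 - \<mu>)) * f a + (1 - \<mu>) * f (b + h)"
    using convex_onD[OF f, of "1 - \<mu>" a "b + h"] \<mu> S by (simp only: b real_scaleR_def)
  ultimately show ?thesis by (simp add: algebra_simps)
qed

locale radial_potential =
  fixes R :: ereal and \<phi> :: "real \<Rightarrow> real"
  assumes R_pos: "R > 0"
    and strict_mono: "strict_mono_on {r. 0 \<le> r \<and> ereal r < R} \<phi>"
    and convex: "convex_on {r. 0 \<le> r \<and> ereal r < R} \<phi>"
begin

abbreviation radii :: "real set" where
  "radii \<equiv> {r. 0 \<le> r \<and> ereal r < R}"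

lemma radii_downward_closed: "r \<in> radii \<Longrightarrow> 0 \<le> r' \<Longrightarrow> r' \<le> r \<Longrightarrow> r' \<in> radii"
  by (auto intro: le_less_trans[of _ "ereal r"])

lemma zero_in_radii: "0 \<in> radii"
  using R_pos by (simp add: zero_ereal_def[symmetric])

lemma ex_pos_in_radii: "\<exists>r>0. r \<in> radii"
proof (cases R)
  case (real r)
  then show ?thesis using R_pos by (intro exI[of _ "r / 2"]) auto
qed (use R_pos in \<open>auto intro: exI[of _ 1]\<close>)

lemma mono_on_radii: "a \<in> radii \<Longrightarrow> b \<in> radii \<Longrightarrow> a \<le> b \<Longrightarrow> \<phi> a \<le> \<phi> b"
  using strict_mono by (metis (no_types, lifting) order_le_less strict_mono_onD)

lemma bdd_above_sublevel: "bdd_above {r. 0 \<le> r \<and> ereal r < R \<and> \<phi> r \<le> v}"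
proof -
  obtain r1 where r1: "r1 > 0" "r1 \<in> radii" using ex_pos_in_radii by blast
  have slope: "\<phi> r1 - \<phi> 0 > 0" using strict_mono_onD[OF strict_mono] zero_in_radii r1 by simp
  show ?thesis unfolding bdd_above_def
  proof (intro exI[of _ "max r1 (r1 * (v - \<phi> 0) / (\<phi> r1 - \<phi> 0))"] ballI)
    fix r assume r: "r \<in> {r. 0 \<le> r \<and> ereal r < R \<and> \<phi> r \<le> v}"
    show "r \<le> max r1 (r1 * (v - \<phi> 0) / (\<phi> r1 - \<phi> 0))"
    proof (cases "r \<le> r1")
      case False
      define \<mu> where "\<mu> = r1 / r"
      have \<mu>: "0 \<le> \<mu>" "\<mu> \<le> 1" using False r1 by (auto simp: \<mu>_def)
      have "\<phi> ((1 - \<mu>) * 0 + \<mu> * r) \<le> (1 - \<mu>) * \<phi> 0 + \<mu> * \<phi> r"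
        using convex_onD[OF convex \<mu>, of 0 r] zero_in_radii r by auto
      moreover have "(1 - \<mu>) * 0 + \<mu> * r = r1" using False r1 by (simp add: \<mu>_def)
      ultimately have "\<phi> r1 - \<phi> 0 \<le> \<mu> * (\<phi> r - \<phi> 0)" by (simp add: algebra_simps)
      also have "\<dots> \<le> \<mu> * (v - \<phi> 0)" using r \<mu> by (intro mult_left_mono) auto
      finally have "(\<phi> r1 - \<phi> 0) * r \<le> r1 * (v - \<phi> 0)"
        using False r1 by (simp add: \<mu>_def field_simps)
      then have "r \<le> r1 * (v - \<phi> 0) / (\<phi> r1 - \<phi> 0)"
        using slope by (simp add: field_simps mult.commute)
      then show ?thesis by simp
    qed simp
  qed
qed

text \<open>The inserted \<open>0\<close> makes the value \<open>0\<close> (not \<open>Sup {}\<close>) when \<open>v < \<phi> 0\<close>.\<close>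
definition level_radius :: "real \<Rightarrow> real" where
  "level_radius v = Sup (insert 0 {r. 0 \<le> r \<and> ereal r < R \<and> \<phi> r \<le> v})"

lemma level_radius_upper: "r \<in> radii \<Longrightarrow> \<phi> r \<le> v \<Longrightarrow> r \<le> level_radius v"
  unfolding level_radius_def by (intro cSup_upper) (auto intro: bdd_above_sublevel)

lemma level_radius_least:
  "0 \<le> c \<Longrightarrow> (\<And>r. r \<in> radii \<Longrightarrow> \<phi> r \<le> v \<Longrightarrow> r \<le> c) \<Longrightarrow> level_radius v \<le> c"
  unfolding level_radius_def by (intro cSup_least) auto

lemma mono_level_radius: "mono level_radius"
  unfolding mono_def level_radius_def
  by (auto intro!: cSup_subset_mono bdd_above_sublevel)

lemma borel_measurable_level_radius[measurable]: "level_radius \<in> borel_measurable borel"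
  by (rule borel_measurable_mono[OF mono_level_radius])

lemma level_radius_pos:
  assumes "\<phi> 0 < v"
  shows "0 < level_radius v"
proof -
  obtain r1 where r1: "r1 > 0" "r1 \<in> radii" using ex_pos_in_radii by blast
  have slope: "\<phi> r1 - \<phi> 0 > 0" using strict_mono_onD[OF strict_mono] zero_in_radii r1 by simp
  define \<mu> where "\<mu> = min 1 ((v - \<phi> 0) / (\<phi> r1 - \<phi> 0))"
  have \<mu>: "0 < \<mu>" "\<mu> \<le> 1" using slope assms by (auto simp: \<mu>_def)
  have "\<phi> (\<mu> * r1) \<le> (1 - \<mu>) * \<phi> 0 + \<mu> * \<phi> r1"
    using convex_onD[OF convex, of \<mu> 0 r1] \<mu> zero_in_radii r1 by auto
  also have "\<dots> = \<phi> 0 + \<mu> * (\<phi> r1 - \<phi> 0)" by (simp add: algebra_simps)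
  also have "\<dots> \<le> v"
  proof -
    have "\<mu> * (\<phi> r1 - \<phi> 0) \<le> (v - \<phi> 0) / (\<phi> r1 - \<phi> 0) * (\<phi> r1 - \<phi> 0)"
      using slope by (intro mult_right_mono) (simp_all add: \<mu>_def)
    then show ?thesis using slope by simp
  qed
  finally have "\<mu> * r1 \<le> level_radius v"
    using \<mu> r1 by (intro level_radius_upper radii_downward_closed[OF r1(2)])
      (auto intro: mult_left_le_one_le)
  moreover have "0 < \<mu> * r1" using \<mu> r1 by simp
  ultimately show ?thesis by linarith
qed

lemma level_radius_shift_le:
  assumes r1: "r1 \<in> radii" and r2: "r2 \<in> radii" and "r1 \<le> r2" "0 \<le> w"
  shows "level_radius (\<phi> r2 + w) - level_radius (\<phi> r1 + w) \<le> r2 - r1"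
proof -
  define p where "p = level_radius (\<phi> r1 + w)"
  have p: "r1 \<le> p" unfolding p_def using r1 \<open>0 \<le> w\<close> by (intro level_radius_upper) simp_all
  have "level_radius (\<phi> r2 + w) \<le> p + (r2 - r1)"
  proof (rule level_radius_least)
    show "0 \<le> p + (r2 - r1)" using p r1 \<open>r1 \<le> r2\<close> by simp
    fix r assume r: "r \<in> radii" "\<phi> r \<le> \<phi> r2 + w"
    show "r \<le> p + (r2 - r1)"
    proof (cases "r \<le> r2")
      case False
      define r' where "r' = r - (r2 - r1)"
      have r': "r1 \<le> r'" "r' + (r2 - r1) = r" using False by (simp_all add: r'_def)
      then have "r' \<in> radii"
        using r1 \<open>r1 \<le> r2\<close> by (intro radii_downward_closed[OF r(1)]) simp_all
      have "\<phi> (r1 + (r2 - r1)) - \<phi> r1 \<le> \<phi> (r' + (r2 - r1)) - \<phi> r'"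
        using r'(1) r(1) r1 \<open>r1 \<le> r2\<close>
        by (intro convex_on_increment_mono[OF convex]) (simp_all add: r'(2))
      then have "\<phi> r' \<le> \<phi> r1 + w" using r(2) r'(2) by simp
      then have "r' \<le> p" unfolding p_def using \<open>r' \<in> radii\<close> by (intro level_radius_upper) simp_all
      then show ?thesis by (simp add: r'_def)
    qed (use p in linarith)
  qed
  then show ?thesis by (simp add: p_def)
qed

lemma level_radius_shift_contraction:
  assumes "r1 \<in> radii" "r2 \<in> radii" "0 \<le> w"
  shows "\<bar>level_radius (\<phi> r1 + w) - level_radius (\<phi> r2 + w)\<bar> \<le> \<bar>r1 - r2\<bar>"
proof -
  have *: "\<bar>level_radius (\<phi> a + w) - level_radius (\<phi> b + w)\<bar> \<le> \<bar>a - b\<bar>"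
    if "a \<in> radii" "b \<in> radii" "a \<le> b" for a b
    using level_radius_shift_le[OF that \<open>0 \<le> w\<close>] mono_level_radius mono_on_radii[OF that]
    by (auto simp: mono_def)
  show ?thesis
    using *[OF assms(1,2)] *[OF assms(2,1)] by (cases "r1 \<le> r2") (simp_all add: abs_minus_commute)
qed

lemma sublevel_eq_ball_or_cball:
  fixes v :: real
  shows "{z::'a::real_normed_vector. ereal (norm z) < R \<and> \<phi> (norm z) \<le> v} = ball 0 (level_radius v) \<or>
    {z::'a. ereal (norm z) < R \<and> \<phi> (norm z) \<le> v} = cball 0 (level_radius v)"
    (is "?L = _ \<or> ?L = _")
proof -
  define L where "L = ?L"
  have L_iff: "z \<in> L \<longleftrightarrow> norm z \<in> radii \<and> \<phi> (norm z) \<le> v" for z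
    by (simp add: L_def)
  have L_cball: "norm z \<le> level_radius v" if "z \<in> L" for z
    using that by (simp add: L_iff level_radius_upper)
  have ball_L: "z \<in> L" if "norm z < level_radius v" for z
  proof -
    have "\<exists>r \<in> insert 0 {r. 0 \<le> r \<and> ereal r < R \<and> \<phi> r \<le> v}. norm z < r"
      using that bdd_above_sublevel[of v] unfolding level_radius_def
      by (subst less_cSup_iff[symmetric]) simp_all
    then obtain r where r: "r \<in> radii" "\<phi> r \<le> v" "norm z < r"
      using norm_ge_zero[of z] by (auto simp: not_less[symmetric])
    then have "norm z \<in> radii"
      using radii_downward_closed[OF r(1), of "norm z"] by simp
    then show "z \<in> L"
      using mono_on_radii[OF _ r(1), of "norm z"] r by (simp add: L_iff)
  qed
  show ?thesis
  proof (cases "level_radius v \<in> radii \<and> \<phi> (level_radius v) \<le> v")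
    case True
    have "z \<in> L \<longleftrightarrow> norm z \<le> level_radius v" for z
      using L_cball[of z] ball_L[of z] True L_iff[of z] by (cases "norm z = level_radius v") auto
    then have "L = cball 0 (level_radius v)" by (simp add: set_eq_iff)
    then show ?thesis by (simp add: L_def)
  next
    case False
    have "z \<in> L \<longleftrightarrow> norm z < level_radius v" for z
      using L_cball[of z] ball_L[of z] False L_iff[of z] by (cases "norm z = level_radius v") auto
    then have "L = ball 0 (level_radius v)" by (simp add: set_eq_iff)
    then show ?thesis by (simp add: L_def)
  qed
qed

end

lemma emeasure_lborel_scaleR_vimage:
  fixes S :: "'a::euclidean_space set"
  assumes "c \<noteq> 0" and [measurable]: "S \<in> sets borel"
  shows "emeasure lborel S = ennreal (\<bar>c\<bar> ^ DIM('a)) * emeasure lborel (scaleR c -` S)"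
proof -
  have "emeasure lborel S =
      emeasure (density (distr lborel borel (\<lambda>x. 0 + c *\<^sub>R x)) (\<lambda>_. \<bar>c\<bar> ^ DIM('a))) S"
    using arg_cong[OF lborel_affine[of c "0::'a"], of "\<lambda>M. emeasure M S"] assms by simp
  also have "\<dots> = (\<integral>\<^sup>+ x. ennreal (\<bar>c\<bar> ^ DIM('a)) * indicator S (c *\<^sub>R x) \<partial>lborel)"
    by (simp add: emeasure_density nn_integral_distr)
  also have "\<dots> = ennreal (\<bar>c\<bar> ^ DIM('a)) * emeasure lborel (scaleR c -` S)"
    using measurable_sets[of "scaleR c" borel borel S]
    by (subst nn_integral_cmult) (simp_all add: indicator_vimage[symmetric] del: indicator_vimage)
  finally show ?thesis .
qed

lemma uniform_measure_lborel_ball_eq_cball: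
  "uniform_measure lborel (ball c a) = uniform_measure lborel (cball (c::'a::euclidean_space) a)"
proof -
  have null: "sphere c a \<in> null_sets lborel"
    using negligible_sphere[of c a]
    by (auto simp: null_sets_completion_iff negligible_iff_null_sets negligible_convex_frontier)
  have eq: "emeasure lborel (ball c a \<inter> A) = emeasure lborel (cball c a \<inter> A)"
    if [measurable]: "A \<in> sets borel" for A
  proof (rule antisym)
    show "emeasure lborel (ball c a \<inter> A) \<le> emeasure lborel (cball c a \<inter> A)"
      by (intro emeasure_mono) auto
    have "emeasure lborel (cball c a \<inter> A) \<le> emeasure lborel (ball c a \<inter> A \<union> sphere c a)"
      by (intro emeasure_mono) auto
    also have "\<dots> = emeasure lborel (ball c a \<inter> A)"
      using null by (intro emeasure_Un_null_set) auto
    finally show "emeasure lborel (cball c a \<inter> A) \<le> emeasure lborel (ball c a \<inter> A)" .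
  qed
  show ?thesis
    using eq[of UNIV] by (intro measure_eqI) (simp_all add: eq)
qed

definition uniform_unit_ball :: "'a::euclidean_space measure" where
  "uniform_unit_ball = uniform_measure lborel (cball 0 1)"

lemma sets_uniform_unit_ball[simp, measurable_cong]: "sets uniform_unit_ball = sets borel"
  by (simp add: uniform_unit_ball_def)

lemma space_uniform_unit_ball[simp]: "space uniform_unit_ball = UNIV"
  by (simp add: uniform_unit_ball_def)

lemma prob_space_uniform_unit_ball: "prob_space (uniform_unit_ball :: 'a::euclidean_space measure)"
  unfolding uniform_unit_ball_def
  by (intro prob_space_uniform_measure) (simp_all add: emeasure_cball order_less_imp_not_eq2)

lemma distr_scaleR_uniform_unit_ball:
  assumes "0 < a"
  shows "distr uniform_unit_ball borel (scaleR a) = uniform_measure lborel (cball (0::'a::euclidean_space) a)"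
proof (rule measure_eqI)
  fix A :: "'a set" assume "A \<in> sets (distr uniform_unit_ball borel (scaleR a))"
  then have [measurable]: "A \<in> sets borel" "scaleR a -` A \<in> sets borel"
    using measurable_sets[of "scaleR a" borel borel A] by simp_all
  let ?V = "unit_ball_vol (real DIM('a))" and ?s = "ennreal (a ^ DIM('a))"
  have vimage: "scaleR a -` cball 0 a = cball (0::'a) 1"
    using assms by (auto simp: norm_scaleR)
  have "emeasure (uniform_measure lborel (cball 0 a)) A =
      emeasure lborel (cball 0 a \<inter> A) / ennreal (?V * a ^ DIM('a))"
    using assms by (simp add: emeasure_cball)
  also have "\<dots> = emeasure lborel (cball 0 1 \<inter> scaleR a -` A) * ?s / (ennreal ?V * ?s)"
    using emeasure_lborel_scaleR_vimage[of a "cball 0 a \<inter> A"] assms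
    by (simp add: vimage ennreal_mult' mult.commute)
  also have "\<dots> = emeasure (distr uniform_unit_ball borel (scaleR a)) A"
    using assms
    by (simp add: emeasure_distr uniform_unit_ball_def emeasure_cball divide_mult_eq
        order_less_imp_not_eq2)
  finally show "emeasure (distr uniform_unit_ball borel (scaleR a)) A =
      emeasure (uniform_measure lborel (cball 0 a)) A" ..
qed simp

lemma nn_integral_one_minus_power:
  "(\<integral>\<^sup>+ s. ennreal (1 - s ^ n) * indicator {0..1::real} s \<partial>lborel) = ennreal (real n / (real n + 1))"
proof -
  have "((\<lambda>s. 1 - s ^ n) has_integral ((1 - 1 ^ Suc n / Suc n) - (0 - 0 ^ Suc n / Suc n))) {0..1::real}"
  proof (rule fundamental_theorem_of_calculus[where f = "\<lambda>s. s - s ^ Suc n / Suc n"])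
    fix x :: real
    show "((\<lambda>s. s - s ^ Suc n / Suc n) has_vector_derivative (1 - x ^ n)) (at x within {0..1})"
      unfolding has_real_derivative_iff_has_vector_derivative[symmetric]
      by (intro derivative_eq_intros) (auto simp del: of_nat_Suc)
  qed simp
  then have "((\<lambda>s. 1 - s ^ n) has_integral (real n / (real n + 1))) {0..1::real}"
    by (simp add: field_simps)
  then show ?thesis
    by (rule nn_integral_has_integral_lebesgue'[rotated]) (simp add: power_le_one)
qed

text \<open>For \<open>s \<ge> 1\<close> both sides are \<open>0\<close>: \<open>ennreal\<close> truncates the negative \<open>1 - s ^ DIM('a)\<close>.\<close>
lemma emeasure_uniform_unit_ball_norm_gt:
  assumes "0 \<le> s"
  shows "emeasure uniform_unit_ball {u::'a::euclidean_space. s < norm u} = ennreal (1 - s ^ DIM('a))"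
proof -
  let ?V = "unit_ball_vol (real DIM('a))"
  have "emeasure uniform_unit_ball {u::'a. s < norm u}
      = emeasure lborel (cball 0 1 \<inter> {u::'a. s < norm u}) / ennreal ?V"
    by (simp add: uniform_unit_ball_def emeasure_cball)
  also have "\<dots> = ennreal (1 - s ^ DIM('a))"
  proof (cases "s \<le> 1")
    case True
    have "emeasure lborel (cball 0 1 \<inter> {u::'a. s < norm u}) =
        emeasure lborel (cball (0::'a) 1 - cball 0 s)"
      by (rule arg_cong[where f = "emeasure lborel"]) auto
    also have "\<dots> = ennreal (?V - ?V * s ^ DIM('a))"
      using True assms
      by (simp add: emeasure_Diff emeasure_cball subset_cball ennreal_minus mult_left_le power_le_one)
    finally show ?thesis
      using True assms
      by (simp add: divide_ennreal power_le_one mult_left_le diff_divide_distrib order_less_imp_not_eq2)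
  next
    case False
    then have "cball 0 1 \<inter> {u::'a. s < norm u} = {}" by auto
    moreover have "1 \<le> s ^ DIM('a)" using False by (simp add: one_le_power)
    ultimately show ?thesis by (simp add: ennreal_eq_0_iff)
  qed
  finally show ?thesis .
qed

lemma nn_integral_norm_uniform_unit_ball:
  "(\<integral>\<^sup>+ u. norm u \<partial>(uniform_unit_ball :: 'a::euclidean_space measure)) =
    ennreal (real DIM('a) / (real DIM('a) + 1))"
proof -
  interpret U: prob_space "uniform_unit_ball :: 'a measure" by (rule prob_space_uniform_unit_ball)
  interpret pair_sigma_finite lborel "uniform_unit_ball :: 'a measure" ..
  \<comment> \<open>layer cake: \<open>norm u\<close> is the length of \<open>{s. 0 \<le> s < norm u}\<close>\<close>
  let ?f = "\<lambda>s (u::'a). indicator {(s, u). 0 \<le> s \<and> s < norm u} (s, u) :: ennreal"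
  have "(\<integral>\<^sup>+ u. norm (u::'a) \<partial>uniform_unit_ball) =
      (\<integral>\<^sup>+ u. (\<integral>\<^sup>+ s. ?f s u \<partial>lborel) \<partial>uniform_unit_ball)"
  proof (intro nn_integral_cong)
    fix u :: 'a
    have "(\<lambda>s. ?f s u) = indicator {0..<norm u}" by (auto simp: indicator_def)
    then show "ennreal (norm u) = (\<integral>\<^sup>+ s. ?f s u \<partial>lborel)" by simp
  qed
  also have "\<dots> = (\<integral>\<^sup>+ s. (\<integral>\<^sup>+ u. ?f s u \<partial>uniform_unit_ball) \<partial>lborel)"
    by (rule Fubini') measurable
  also have "\<dots> = (\<integral>\<^sup>+ s. ennreal (1 - s ^ DIM('a)) * indicator {0..1} s \<partial>lborel)"
  proof (intro nn_integral_cong)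
    fix s :: real
    show "(\<integral>\<^sup>+ u. ?f s u \<partial>uniform_unit_ball) =
        ennreal (1 - s ^ DIM('a)) * indicator {0..1} s"
    proof (cases "0 \<le> s")
      case True
      have "(\<lambda>u. ?f s u) = indicator {u::'a. s < norm u}"
        using True by (auto simp: indicator_def)
      then have "(\<integral>\<^sup>+ u. ?f s u \<partial>uniform_unit_ball) =
          emeasure uniform_unit_ball {u::'a. s < norm u}"
        by simp
      also have "\<dots> = ennreal (1 - s ^ DIM('a))"
        using True by (rule emeasure_uniform_unit_ball_norm_gt)
      finally show ?thesis
        using True by (cases "s \<le> 1") (auto simp: ennreal_eq_0_iff one_le_power)
    qed simp
  qed
  also have "\<dots> = ennreal (real DIM('a) / (real DIM('a) + 1))"
    by (rule nn_integral_one_minus_power)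
  finally show ?thesis .
qed

definition uniform_unit_interval :: "real measure" where
  "uniform_unit_interval = uniform_measure lborel {0<..<1}"

lemma sets_uniform_unit_interval[simp, measurable_cong]: "sets uniform_unit_interval = sets borel"
  by (simp add: uniform_unit_interval_def)

lemma space_uniform_unit_interval[simp]: "space uniform_unit_interval = UNIV"
  by (simp add: uniform_unit_interval_def)

lemma prob_space_uniform_unit_interval: "prob_space uniform_unit_interval"
  unfolding uniform_unit_interval_def by (rule prob_space_uniform_measure) simp_all

lemma nn_integral_rescale_uniform_unit_interval:
  assumes "0 < s" and [measurable]: "f \<in> borel_measurable borel"
  shows "(\<integral>\<^sup>+ t. f t * indicator {0<..<s} t \<partial>lborel) =
    ennreal s * (\<integral>\<^sup>+ \<tau>. f (s * \<tau>) \<partial>uniform_unit_interval)"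
proof -
  have "indicator {0<..<s} (s * \<tau>) = (indicator {0<..<1} \<tau> :: ennreal)" for \<tau>
    using assms by (simp add: indicator_def zero_less_mult_iff)
  then show ?thesis
    using nn_integral_real_affine[of "\<lambda>t. f t * indicator {0<..<s} t" s 0] assms
    by (simp add: uniform_unit_interval_def nn_integral_uniform_measure divide_ennreal_def)
qed

lemma wasserstein_distr_le:
  fixes f g :: "'b \<Rightarrow> 'a::euclidean_space"
  assumes [measurable]: "f \<in> N \<rightarrow>\<^sub>M borel" "g \<in> N \<rightarrow>\<^sub>M borel"
  shows "wasserstein (distr N borel f) (distr N borel g) \<le> (\<integral>\<^sup>+ w. dist (f w) (g w) \<partial>N)"
proof -
  define \<gamma> where "\<gamma> = distr N (borel \<Otimes>\<^sub>M borel) (\<lambda>w. (f w, g w))"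
  have "distr \<gamma> borel fst = distr N borel f" "distr \<gamma> borel snd = distr N borel g"
    unfolding \<gamma>_def by (subst distr_distr; simp add: comp_def)+
  then have "\<gamma> \<in> couplings (distr N borel f) (distr N borel g)"
    by (simp add: couplings_def \<gamma>_def)
  then have "wasserstein (distr N borel f) (distr N borel g) \<le> (\<integral>\<^sup>+ z. dist (fst z) (snd z) \<partial>\<gamma>)"
    unfolding wasserstein_def by (rule INF_lower)
  also have "\<dots> = (\<integral>\<^sup>+ w. dist (f w) (g w) \<partial>N)"
    unfolding \<gamma>_def by (subst nn_integral_distr) simp_all
  finally show ?thesis .
qed

lemma slice_kernel_eqI:
  fixes M :: "'a::euclidean_space measure"
  assumes "sets M = sets borel"
    and "\<And>A. A \<in> sets borel \<Longrightarrow>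
      ennreal (1 / \<rho> x) * (\<integral>\<^sup>+ t \<in> {0..\<rho> x}. emeasure (unif_level G \<rho> t) A \<partial>lborel) = emeasure M A"
  shows "slice_kernel G \<rho> x = M"
proof -
  have "slice_kernel G \<rho> x = measure_of UNIV (sets borel) (emeasure M)"
    unfolding slice_kernel_def
  proof (rule measure_of_eq)
    fix A :: "'a set" assume "A \<in> sigma_sets UNIV (sets borel)"
    then have "A \<in> sets borel" using sets.sigma_sets_eq[of "borel :: 'a measure"] by simp
    then show "ennreal (1 / \<rho> x) * (\<integral>\<^sup>+ t \<in> {0..\<rho> x}. emeasure (unif_level G \<rho> t) A \<partial>lborel) =
        emeasure M A"
      by (rule assms(2))
  qed simp
  also have "\<dots> = M"
    using measure_of_of_measure[of M] sets_eq_imp_space_eq[OF assms(1)] assms(1) by simp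
  finally show ?thesis .
qed

context radial_potential
begin

lemma level_set_potential:
  assumes "0 < t"
  shows "level_set (open_ball_R R) (\<lambda>z::'a::euclidean_space. exp (- \<phi> (norm z))) t =
    {z. ereal (norm z) < R \<and> \<phi> (norm z) \<le> - ln t}"
proof -
  have "t \<le> exp (- \<phi> r) \<longleftrightarrow> \<phi> r \<le> - ln t" for r
    using assms by (subst ln_le_cancel_iff[symmetric]) auto
  then show ?thesis by (auto simp: level_set_def open_ball_R_def)
qed

lemma unif_level_potential:
  assumes "0 < t" "\<phi> 0 < - ln t"
  shows "unif_level (open_ball_R R) (\<lambda>z::'a::euclidean_space. exp (- \<phi> (norm z))) t =
    distr uniform_unit_ball borel (scaleR (level_radius (- ln t)))"
proof -
  have "level_set (open_ball_R R) (\<lambda>z::'a. exp (- \<phi> (norm z))) t = ball 0 (level_radius (- ln t)) \<or>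
        level_set (open_ball_R R) (\<lambda>z::'a. exp (- \<phi> (norm z))) t = cball 0 (level_radius (- ln t))"
    unfolding level_set_potential[OF assms(1)] by (rule sublevel_eq_ball_or_cball)
  then have "unif_level (open_ball_R R) (\<lambda>z::'a. exp (- \<phi> (norm z))) t =
      uniform_measure lborel (cball 0 (level_radius (- ln t)))"
    unfolding unif_level_def using uniform_measure_lborel_ball_eq_cball by metis
  then show ?thesis
    using distr_scaleR_uniform_unit_ball[OF level_radius_pos[OF assms(2)], where 'a='a] by simp
qed

text \<open>The \<open>max 0\<close> only affects \<open>\<tau> > 1\<close>, a null set for the uniform distribution on
  \<open>(0, 1)\<close>; it keeps the level increment nonnegative, as the contraction lemma requires.\<close>
definition slice_map :: "real \<Rightarrow> real \<times> 'a::euclidean_space \<Rightarrow> 'a" where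
  "slice_map v = (\<lambda>(\<tau>, u). level_radius (v + max 0 (- ln \<tau>)) *\<^sub>R u)"

lemma measurable_slice_map[measurable]:
  "slice_map v \<in> borel_measurable (uniform_unit_interval \<Otimes>\<^sub>M uniform_unit_ball)"
  unfolding slice_map_def by measurable

lemma set_nn_integral_unif_level_potential:
  assumes s: "0 < s" "\<phi> 0 \<le> - ln s" and [measurable]: "A \<in> sets borel"
  shows "(\<integral>\<^sup>+ t \<in> {0..s}.
            emeasure (unif_level (open_ball_R R) (\<lambda>z::'a::euclidean_space. exp (- \<phi> (norm z))) t) A
          \<partial>lborel) =
    (\<integral>\<^sup>+ t. (\<integral>\<^sup>+ u. indicator A (level_radius (- ln t) *\<^sub>R u) \<partial>uniform_unit_ball)
          * indicator {0<..<s} t \<partial>lborel)"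
proof (rule nn_integral_cong_AE)
  have unif: "emeasure (unif_level (open_ball_R R) (\<lambda>z::'a. exp (- \<phi> (norm z))) t) A =
      (\<integral>\<^sup>+ u. indicator A (level_radius (- ln t) *\<^sub>R u) \<partial>uniform_unit_ball)"
    if t: "0 < t" "t < s" for t
  proof -
    have "ln t < ln s" using t by simp
    then have "\<phi> 0 < - ln t" using s(2) by linarith
    then show ?thesis
      using t nn_integral_distr[where T = "scaleR (level_radius (- ln t))" and M = uniform_unit_ball
          and M' = borel and f = "indicator A"]
      by (simp add: unif_level_potential)
  qed
  show "AE t in lborel.
      emeasure (unif_level (open_ball_R R) (\<lambda>z::'a. exp (- \<phi> (norm z))) t) A * indicator {0..s} t =
      (\<integral>\<^sup>+ u. indicator A (level_radius (- ln t) *\<^sub>R u) \<partial>uniform_unit_ball) * indicator {0<..<s} t"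
    using AE_lborel_singleton[of 0] AE_lborel_singleton[of s]
  proof eventually_elim
    case (elim t)
    then show ?case using unif[of t] by (cases "0 < t \<and> t < s") auto
  qed
qed

lemma emeasure_distr_slice_map:
  assumes [measurable]: "A \<in> sets borel"
  shows "emeasure (distr (uniform_unit_interval \<Otimes>\<^sub>M uniform_unit_ball) borel (slice_map v)) A =
    (\<integral>\<^sup>+ \<tau>. (\<integral>\<^sup>+ u. indicator A (level_radius (v + max 0 (- ln \<tau>)) *\<^sub>R (u::'a::euclidean_space))
        \<partial>uniform_unit_ball) \<partial>uniform_unit_interval)"
proof -
  interpret U: prob_space "uniform_unit_ball :: 'a measure" by (rule prob_space_uniform_unit_ball)
  have "emeasure (distr (uniform_unit_interval \<Otimes>\<^sub>M uniform_unit_ball) borel (slice_map v)) A =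
      (\<integral>\<^sup>+ w. indicator A (slice_map v w :: 'a) \<partial>(uniform_unit_interval \<Otimes>\<^sub>M uniform_unit_ball))"
    using nn_integral_distr[where T = "slice_map v" and M' = borel and f = "indicator A"
        and M = "uniform_unit_interval \<Otimes>\<^sub>M uniform_unit_ball"]
    by simp
  also have "\<dots> = (\<integral>\<^sup>+ \<tau>. (\<integral>\<^sup>+ u. indicator A (slice_map v (\<tau>, u)) \<partial>uniform_unit_ball) \<partial>uniform_unit_interval)"
    by (rule U.nn_integral_fst[symmetric]) simp
  finally show ?thesis by (simp add: slice_map_def)
qed

lemma slice_kernel_eq_distr_slice_map:
  fixes x :: "'a::euclidean_space"
  assumes x: "x \<in> open_ball_R R"
  shows "slice_kernel (open_ball_R R) (\<lambda>z. exp (- \<phi> (norm z))) x =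
    distr (uniform_unit_interval \<Otimes>\<^sub>M uniform_unit_ball) borel (slice_map (\<phi> (norm x)))"
    (is "slice_kernel _ ?\<rho> x = ?K")
proof (rule slice_kernel_eqI)
  interpret U: prob_space "uniform_unit_ball :: 'a measure" by (rule prob_space_uniform_unit_ball)
  fix A :: "'a set" assume [measurable]: "A \<in> sets borel"
  define s where "s = ?\<rho> x"
  have s: "0 < s" by (simp add: s_def)
  have "norm x \<in> radii" using x by (simp add: open_ball_R_def)
  then have ln_s: "\<phi> 0 \<le> - ln s"
    using mono_on_radii[OF zero_in_radii] by (simp add: s_def)
  define h where "h a = (\<integral>\<^sup>+ u. indicator A (a *\<^sub>R u) \<partial>(uniform_unit_ball :: 'a measure))" for a
  have [measurable]: "h \<in> borel_measurable borel" unfolding h_def by measurable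
  have "(\<integral>\<^sup>+ t \<in> {0..s}. emeasure (unif_level (open_ball_R R) ?\<rho> t) A \<partial>lborel)
      = (\<integral>\<^sup>+ t. h (level_radius (- ln t)) * indicator {0<..<s} t \<partial>lborel)"
    unfolding h_def using s ln_s by (rule set_nn_integral_unif_level_potential) simp
  also have "\<dots> = ennreal s * (\<integral>\<^sup>+ \<tau>. h (level_radius (- ln (s * \<tau>))) \<partial>uniform_unit_interval)"
    using s by (rule nn_integral_rescale_uniform_unit_interval) measurable
  also have "(\<integral>\<^sup>+ \<tau>. h (level_radius (- ln (s * \<tau>))) \<partial>uniform_unit_interval)
      = (\<integral>\<^sup>+ \<tau>. h (level_radius (\<phi> (norm x) + max 0 (- ln \<tau>))) \<partial>uniform_unit_interval)"
    unfolding uniform_unit_interval_def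
    by (intro nn_integral_cong_AE AE_uniform_measureI) (auto simp: ln_mult s s_def)
  also have "\<dots> = emeasure ?K A"
    by (simp add: h_def emeasure_distr_slice_map)
  finally show "ennreal (1 / ?\<rho> x) * (\<integral>\<^sup>+ t \<in> {0..?\<rho> x}. emeasure (unif_level (open_ball_R R) ?\<rho> t) A \<partial>lborel)
      = emeasure ?K A"
    using s by (simp add: s_def mult.assoc[symmetric] ennreal_mult[symmetric])
qed simp

lemma nn_integral_dist_slice_map_le:
  assumes "r1 \<in> radii" "r2 \<in> radii"
  shows "(\<integral>\<^sup>+ w. dist (slice_map (\<phi> r1) w) (slice_map (\<phi> r2) w)
            \<partial>(uniform_unit_interval \<Otimes>\<^sub>M (uniform_unit_ball :: 'a::euclidean_space measure)))
         \<le> ennreal (real DIM('a) / (real DIM('a) + 1) * \<bar>r1 - r2\<bar>)"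
proof -
  interpret T: prob_space uniform_unit_interval by (rule prob_space_uniform_unit_interval)
  interpret U: prob_space "uniform_unit_ball :: 'a measure" by (rule prob_space_uniform_unit_ball)
  have "(\<integral>\<^sup>+ w. dist (slice_map (\<phi> r1) w) (slice_map (\<phi> r2) w :: 'a) \<partial>(uniform_unit_interval \<Otimes>\<^sub>M uniform_unit_ball))
      \<le> (\<integral>\<^sup>+ w. ennreal \<bar>r1 - r2\<bar> * norm (snd w :: 'a) \<partial>(uniform_unit_interval \<Otimes>\<^sub>M uniform_unit_ball))"
  proof (intro nn_integral_mono)
    fix w :: "real \<times> 'a"
    have "dist (slice_map (\<phi> r1) w) (slice_map (\<phi> r2) w)
        = \<bar>level_radius (\<phi> r1 + max 0 (- ln (fst w))) - level_radius (\<phi> r2 + max 0 (- ln (fst w)))\<bar> * norm (snd w)"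
      by (simp add: slice_map_def split_beta dist_norm scaleR_diff_left[symmetric])
    also have "\<dots> \<le> \<bar>r1 - r2\<bar> * norm (snd w)"
      using level_radius_shift_contraction[OF assms] by (intro mult_right_mono) simp_all
    finally show "ennreal (dist (slice_map (\<phi> r1) w) (slice_map (\<phi> r2) w)) \<le> ennreal \<bar>r1 - r2\<bar> * norm (snd w)"
      by (simp add: ennreal_mult[symmetric] ennreal_leI)
  qed
  also have "\<dots> = ennreal \<bar>r1 - r2\<bar> * (\<integral>\<^sup>+ u. norm u \<partial>(uniform_unit_ball :: 'a measure))"
    by (simp add: U.nn_integral_fst[symmetric] nn_integral_cmult T.emeasure_space_1[unfolded space_uniform_unit_interval])
  also have "\<dots> = ennreal (real DIM('a) / (real DIM('a) + 1) * \<bar>r1 - r2\<bar>)"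
    by (simp add: nn_integral_norm_uniform_unit_ball ennreal_mult[symmetric] mult.commute)
  finally show ?thesis .
qed

lemma wasserstein_slice_kernel_le:
  fixes x y :: "'a::euclidean_space"
  assumes x: "x \<in> open_ball_R R" and y: "y \<in> open_ball_R R"
  shows "wasserstein
           (slice_kernel (open_ball_R R) (\<lambda>z. exp (- \<phi> (norm z))) x)
           (slice_kernel (open_ball_R R) (\<lambda>z. exp (- \<phi> (norm z))) y)
         \<le> ennreal ((1 - 1 / (real DIM('a) + 1)) * \<bar>norm x - norm y\<bar>)"
proof -
  have radii: "norm x \<in> radii" "norm y \<in> radii" using x y by (simp_all add: open_ball_R_def)
  let ?N = "uniform_unit_interval \<Otimes>\<^sub>M (uniform_unit_ball :: 'a measure)"
  have "wasserstein (distr ?N borel (slice_map (\<phi> (norm x)))) (distr ?N borel (slice_map (\<phi> (norm y))))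
      \<le> (\<integral>\<^sup>+ w. dist (slice_map (\<phi> (norm x)) w) (slice_map (\<phi> (norm y)) w) \<partial>?N)"
    by (rule wasserstein_distr_le; rule measurable_slice_map)
  also have "\<dots> \<le> ennreal (real DIM('a) / (real DIM('a) + 1) * \<bar>norm x - norm y\<bar>)"
    by (rule nn_integral_dist_slice_map_le[OF radii])
  also have "real DIM('a) / (real DIM('a) + 1) = 1 - 1 / (real DIM('a) + 1)"
    by (simp add: field_simps)
  finally show ?thesis
    by (simp only: slice_kernel_eq_distr_slice_map x y)
qed

end

theorem mainTheorem1:
  fixes R :: ereal and \<phi> :: "real \<Rightarrow> real" and x y :: "'a::euclidean_space"
  assumes "R > 0"
    and "strict_mono_on {r. 0 \<le> r \<and> ereal r < R} \<phi>"
    and "convex_on {r. 0 \<le> r \<and> ereal r < R} \<phi>"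
    and "x \<in> open_ball_R R" and "y \<in> open_ball_R R"
  shows "wasserstein
           (slice_kernel (open_ball_R R) (\<lambda>z. exp (- \<phi> (norm z))) x)
           (slice_kernel (open_ball_R R) (\<lambda>z. exp (- \<phi> (norm z))) y)
         \<le> ennreal ((1 - 1 / (real DIM('a) + 1)) * \<bar>norm x - norm y\<bar>)"
proof -
  interpret radial_potential R \<phi> using assms(1-3) by unfold_locales
  show ?thesis using assms(4,5) by (rule wasserstein_slice_kernel_le)
qed

end
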